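(* For every ordinal $\alpha$ and every closed $\mathcal L$-term $t$: $(\mathbb N,T^*_\alpha,P^*_\alpha)\not\models_{SK}\mathrm P\ulcorner\mathrm Pt\urcorner\vee\mathrm P\ulcorner\neg\mathrm Pt\urcorner$. In particular, $P_0^{*-}\cap P_\infty^{*+}=\emptyset$, where $(T^*_\infty,P^*_\infty)$ is the stage at which the modified sequence stabilizes.
   Context: Language. Let $\mathcal L_{\mathbb N}$ be the language of first-order Peano arithmetic and $\mathcal L=\mathcal L_{\mathbb N}\cup\{\mathrm T,\mathrm P\}$ with unary predicates $\mathrm T,\mathrm P$. $\mathcal L$-formulas are in Tait style: literals are $s=t$, $s\neq t$, $\mathrm Tt$, $\neg\mathrm Tt$, $\mathrm Pt$, $\neg\mathrm Pt$; formulas are built from literals by $\wedge,\vee,\forall,\exists$; negation of an arbitrary formula is defined by De Morgan dualities with $\neg\neg\varphi:=\varphi$. A standard Gödel numbering is fixed; $\#e$ is the code of $e$, $\ulcorner e\urcorner$ the numeral of $\#e$, $\mathrm{val}(t)$ the value of a closed term $t$, $\dot\neg$ the primitive recursive function with $\dot\neg(\#\varphi)=\#\neg\varphi$; $\mathrm T\varphi,\mathrm P\varphi$ abbreviate $\mathrm T\ulcorner\varphi\urcorner,\mathrm P\ulcorner\varphi\urcorner$. Semantics. A partial model is $(\mathbb N,T,P)$ with $\mathbb N$ the standard model and $T=(T^+,T^-)$, $P=(P^+,P^-)$ pairs of subsets of $\omega$. Strong Kleene satisfaction $\models_{SK}$: arithmetic literals evaluated in $\mathbb N$; $\mathrm Tt$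 satisfied iff $\mathrm{val}(t)\in T^+$, $\neg\mathrm Tt$ iff $\mathrm{val}(t)\in T^-$, likewise for $\mathrm P$ with $P^\pm$; conjunction iff both, disjunction iff at least one, $\forall x\varphi(x)$ iff all numeral instances, $\exists x\varphi(x)$ iff some numeral instance. Base paradoxicality. $\mathrm{PA}[\mathrm{SK}]$ is the two-sided sequent calculus for Strong Kleene logic with identity in $\mathcal L$ (initial sequents $\varphi\Rightarrow\varphi$, cut, weakening, the rule from $\Gamma\Rightarrow\Delta,\varphi$ infer $\neg\varphi,\Gamma\Rightarrow\Delta$, usual rules for $\wedge,\vee,\forall,\exists$, reflexivity $\Rightarrow t=t$, replacement from $\Gamma\Rightarrow\Delta,\varphi(t)$ infer $\Gamma\Rightarrow\Delta,s\neq t,\varphi(s)$) plus the initial sequents of Peano arithmetic and the induction rule for all $\mathcal L$-formulas. A sentence $\varphi$ is base paradoxical iff $\mathrm{PA}[\mathrm{SK}]$ derives $\varphi\Leftrightarrow\neg\mathrm T\varphi$ and $\neg\varphi\Leftrightarrow\mathrm T\varphi$ ($\Leftrightarrow$ meaning both sequents). $B(x)$ is an $\mathcal L_{\mathbb N}$-formula defining in $\mathbb N$ the set of codes of base paradoxical sentences, and $\Pi(x):=B(x)\vee B(\dot\neg x)$. Paradoxicality clauses. Let $\mathscr P(x)$ be the $\mathcal L$-formula which is the disjunction of: (1) $x$ codes a sentence and $\Pi(x)$; (2) $x$ codes a sentence $\mathrm Tt$ ($t$ a closed term) and $\mathrm P(\mathrm{val}(t))$; (3) $x$ codes a sentence $\neg\mathrm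 Tt$ and $\mathrm P(\mathrm{val}(t))$; (4) $x$ codes a sentence $\psi\wedge\theta$ and $(\mathrm P\psi\wedge\mathrm P\theta)\vee(\mathrm T\psi\wedge\mathrm P\theta)\vee(\mathrm T\theta\wedge\mathrm P\psi)$; (5) $x$ codes a sentence $\psi\vee\theta$ and $(\mathrm P\psi\wedge\mathrm P\theta)\vee(\neg\mathrm T\psi\wedge\mathrm P\theta)\vee(\neg\mathrm T\theta\wedge\mathrm P\psi)$; (6) $x$ codes a sentence $\forall v\psi$ and $\exists y\,\mathrm P\psi(\dot y)\wedge\forall y(\mathrm P\psi(\dot y)\vee\mathrm T\psi(\dot y))$; (7) $x$ codes a sentence $\exists v\psi$ and $\exists y\,\mathrm P\psi(\dot y)\wedge\forall y(\mathrm P\psi(\dot y)\vee\neg\mathrm T\psi(\dot y))$; here $\psi(\dot y)$ is the code of the result of substituting the numeral of $y$ for $v$. Write $\mathscr P(\varphi)$ for $\mathscr P(\ulcorner\varphi\urcorner)$. Modified sequence. Let $P_0^{*-}$ be the set of codes of the sentences $\mathrm P\ulcorner\varphi\urcorner$ for $\varphi$ an $\mathcal L$-formula. Define $\Gamma^*_{\mathscr{TP}}(T,P)=\big((\{\#\varphi:(\mathbb N,T,P)\models_{SK}\varphi\},\{\#\varphi:(\mathbb N,T,P)\models_{SK}\neg\varphi\}),(\{\#\varphi:(\mathbb N,T,P)\models_{SK}\mathscr P(\varphi)\},\{\#\varphi:(\mathbb N,T,P)\models_{SK}\varphi\vee\neg\varphi\}\cup P_0^{*-})\big)$, $\varphi$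 ranging over $\mathcal L$-sentences. Define $(T^*_0,P^*_0)=((\emptyset,\emptyset),(\emptyset,P_0^{*-}))$, $(T^*_{\xi+1},P^*_{\xi+1})=\Gamma^*_{\mathscr{TP}}(T^*_\xi,P^*_\xi)$, and $(T^*_\lambda,P^*_\lambda)=\bigcup_{\xi<\lambda}(T^*_\xi,P^*_\xi)$ (componentwise union) for limit $\lambda$; this monotone sequence reaches a least fixed point $(T^*_\infty,P^*_\infty)$ with $P^*_\infty=(P_\infty^{*+},P_\infty^{*-})$. *)

theory Defs
  imports Main "HOL-Library.Nat_Bijection" "HOL-Library.Product_Order"
begin

datatype tm = Var nat | Zero | Sc tm | Plus tm tm | Times tm tm

text \<open>Tait-style formulas: literals s=t, s~=t, Tt, ~Tt, Pt, ~Pt; connectives and, or, all, ex.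
  The quantifiers bind de Bruijn index 0.\<close>
datatype fm = Eq tm tm | Neq tm tm | Tr tm | NTr tm | Pr tm | NPr tm
  | And fm fm | Or fm fm | All fm | Ex fm

primrec neg :: "fm \<Rightarrow> fm" where
  "neg (Eq s t) = Neq s t"
| "neg (Neq s t) = Eq s t"
| "neg (Tr t) = NTr t"
| "neg (NTr t) = Tr t"
| "neg (Pr t) = NPr t"
| "neg (NPr t) = Pr t"
| "neg (And a b) = Or (neg a) (neg b)"
| "neg (Or a b) = And (neg a) (neg b)"
| "neg (All a) = Ex (neg a)"
| "neg (Ex a) = All (neg a)"

primrec substt :: "(nat \<Rightarrow> tm) \<Rightarrow> tm \<Rightarrow> tm" where
  "substt \<sigma> (Var n) = \<sigma> n"
| "substt \<sigma> Zero = Zero"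
| "substt \<sigma> (Sc t) = Sc (substt \<sigma> t)"
| "substt \<sigma> (Plus s t) = Plus (substt \<sigma> s) (substt \<sigma> t)"
| "substt \<sigma> (Times s t) = Times (substt \<sigma> s) (substt \<sigma> t)"

definition liftt :: "tm \<Rightarrow> tm" where
  "liftt t = substt (\<lambda>n. Var (Suc n)) t"

definition up :: "(nat \<Rightarrow> tm) \<Rightarrow> nat \<Rightarrow> tm" where
  "up \<sigma> n = (case n of 0 \<Rightarrow> Var 0 | Suc m \<Rightarrow> liftt (\<sigma> m))"

primrec substf :: "(nat \<Rightarrow> tm) \<Rightarrow> fm \<Rightarrow> fm" where
  "substf \<sigma> (Eq s t) = Eq (substt \<sigma> s) (substt \<sigma> t)"
| "substf \<sigma> (Neq s t) = Neq (substt \<sigma> s) (substt \<sigma> t)"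
| "substf \<sigma> (Tr t) = Tr (substt \<sigma> t)"
| "substf \<sigma> (NTr t) = NTr (substt \<sigma> t)"
| "substf \<sigma> (Pr t) = Pr (substt \<sigma> t)"
| "substf \<sigma> (NPr t) = NPr (substt \<sigma> t)"
| "substf \<sigma> (And a b) = And (substf \<sigma> a) (substf \<sigma> b)"
| "substf \<sigma> (Or a b) = Or (substf \<sigma> a) (substf \<sigma> b)"
| "substf \<sigma> (All a) = All (substf (up \<sigma>) a)"
| "substf \<sigma> (Ex a) = Ex (substf (up \<sigma>) a)"

definition liftf :: "fm \<Rightarrow> fm" where
  "liftf \<phi> = substf (\<lambda>n. Var (Suc n)) \<phi>"

definition inst :: "fm \<Rightarrow> tm \<Rightarrow> fm" where
  "inst \<phi> t = substf (\<lambda>n. case n of 0 \<Rightarrow> t | Suc m \<Rightarrow> Var m) \<phi>"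

definition succ_inst :: "fm \<Rightarrow> fm" where
  "succ_inst \<phi> = substf (\<lambda>n. if n = 0 then Sc (Var 0) else Var n) \<phi>"

primrec closedt :: "nat \<Rightarrow> tm \<Rightarrow> bool" where
  "closedt k (Var n) = (n < k)"
| "closedt k Zero = True"
| "closedt k (Sc t) = closedt k t"
| "closedt k (Plus s t) = (closedt k s \<and> closedt k t)"
| "closedt k (Times s t) = (closedt k s \<and> closedt k t)"

primrec closedf :: "nat \<Rightarrow> fm \<Rightarrow> bool" where
  "closedf k (Eq s t) = (closedt k s \<and> closedt k t)"
| "closedf k (Neq s t) = (closedt k s \<and> closedt k t)"
| "closedf k (Tr t) = closedt k t"
| "closedf k (NTr t) = closedt k t"
| "closedf k (Pr t) = closedt k t"
| "closedf k (NPr t) = closedt k t"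
| "closedf k (And a b) = (closedf k a \<and> closedf k b)"
| "closedf k (Or a b) = (closedf k a \<and> closedf k b)"
| "closedf k (All a) = closedf (Suc k) a"
| "closedf k (Ex a) = closedf (Suc k) a"

definition closed_term :: "tm \<Rightarrow> bool" where
  "closed_term t = closedt 0 t"

definition sentence :: "fm \<Rightarrow> bool" where
  "sentence \<phi> = closedf 0 \<phi>"

primrec evalt :: "(nat \<Rightarrow> nat) \<Rightarrow> tm \<Rightarrow> nat" where
  "evalt e (Var n) = e n"
| "evalt e Zero = 0"
| "evalt e (Sc t) = Suc (evalt e t)"
| "evalt e (Plus s t) = evalt e s + evalt e t"
| "evalt e (Times s t) = evalt e s * evalt e t"

text \<open>val(t) for a closed term t (the environment is irrelevant for closed terms).\<close>
definition val :: "tm \<Rightarrow> nat" where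
  "val t = evalt (\<lambda>_. 0) t"

primrec num :: "nat \<Rightarrow> tm" where
  "num 0 = Zero"
| "num (Suc n) = Sc (num n)"

primrec code_tm :: "tm \<Rightarrow> nat" where
  "code_tm (Var n) = prod_encode (0, n)"
| "code_tm Zero = prod_encode (1, 0)"
| "code_tm (Sc t) = prod_encode (2, code_tm t)"
| "code_tm (Plus s t) = prod_encode (3, prod_encode (code_tm s, code_tm t))"
| "code_tm (Times s t) = prod_encode (4, prod_encode (code_tm s, code_tm t))"

primrec code :: "fm \<Rightarrow> nat" where
  "code (Eq s t) = prod_encode (0, prod_encode (code_tm s, code_tm t))"
| "code (Neq s t) = prod_encode (1, prod_encode (code_tm s, code_tm t))"
| "code (Tr t) = prod_encode (2, code_tm t)"
| "code (NTr t) = prod_encode (3, code_tm t)"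
| "code (Pr t) = prod_encode (4, code_tm t)"
| "code (NPr t) = prod_encode (5, code_tm t)"
| "code (And a b) = prod_encode (6, prod_encode (code a, code b))"
| "code (Or a b) = prod_encode (7, prod_encode (code a, code b))"
| "code (All a) = prod_encode (8, code a)"
| "code (Ex a) = prod_encode (9, code a)"

definition gn :: "fm \<Rightarrow> tm" where
  "gn \<phi> = num (code \<phi>)"

text \<open>Sequents Gamma => Delta with finite sets of formulas.  Eigenvariable conditions are
  handled de Bruijn style by lifting the side formulas.\<close>
inductive pask :: "fm set \<Rightarrow> fm set \<Rightarrow> bool" where
  init: "pask {\<phi>} {\<phi>}"
| weak: "pask \<Gamma> \<Delta> \<Longrightarrow> \<Gamma> \<subseteq> \<Gamma>' \<Longrightarrow> \<Delta> \<subseteq> \<Delta>' \<Longrightarrow> finite \<Gamma>' \<Longrightarrow> finite \<Delta>' \<Longrightarrow> pask \<Gamma>' \<Delta>'"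
| cut: "pask \<Gamma> (insert \<phi> \<Delta>) \<Longrightarrow> pask (insert \<phi> \<Gamma>) \<Delta> \<Longrightarrow> pask \<Gamma> \<Delta>"
| negL: "pask \<Gamma> (insert \<phi> \<Delta>) \<Longrightarrow> pask (insert (neg \<phi>) \<Gamma>) \<Delta>"
| andL: "pask (insert \<phi> (insert \<psi> \<Gamma>)) \<Delta> \<Longrightarrow> pask (insert (And \<phi> \<psi>) \<Gamma>) \<Delta>"
| andR: "pask \<Gamma> (insert \<phi> \<Delta>) \<Longrightarrow> pask \<Gamma> (insert \<psi> \<Delta>) \<Longrightarrow> pask \<Gamma> (insert (And \<phi> \<psi>) \<Delta>)"
| orL: "pask (insert \<phi> \<Gamma>) \<Delta> \<Longrightarrow> pask (insert \<psi> \<Gamma>) \<Delta> \<Longrightarrow> pask (insert (Or \<phi> \<psi>) \<Gamma>) \<Delta>"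
| orR: "pask \<Gamma> (insert \<phi> (insert \<psi> \<Delta>)) \<Longrightarrow> pask \<Gamma> (insert (Or \<phi> \<psi>) \<Delta>)"
| allL: "pask (insert (inst \<phi> t) \<Gamma>) \<Delta> \<Longrightarrow> pask (insert (All \<phi>) \<Gamma>) \<Delta>"
| allR: "pask (liftf ` \<Gamma>) (insert \<phi> (liftf ` \<Delta>)) \<Longrightarrow> pask \<Gamma> (insert (All \<phi>) \<Delta>)"
| exL: "pask (insert \<phi> (liftf ` \<Gamma>)) (liftf ` \<Delta>) \<Longrightarrow> pask (insert (Ex \<phi>) \<Gamma>) \<Delta>"
| exR: "pask \<Gamma> (insert (inst \<phi> t) \<Delta>) \<Longrightarrow> pask \<Gamma> (insert (Ex \<phi>) \<Delta>)"
| refl: "pask {} {Eq t t}"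
| repl: "pask \<Gamma> (insert (inst \<phi> t) \<Delta>) \<Longrightarrow> pask \<Gamma> (insert (Neq s t) (insert (inst \<phi> s) \<Delta>))"
| pa1: "pask {} {Neq (Sc s) Zero}"
| pa2: "pask {Eq (Sc s) (Sc t)} {Eq s t}"
| pa3: "pask {} {Eq (Plus s Zero) s}"
| pa4: "pask {} {Eq (Plus s (Sc t)) (Sc (Plus s t))}"
| pa5: "pask {} {Eq (Times s Zero) Zero}"
| pa6: "pask {} {Eq (Times s (Sc t)) (Plus (Times s t) s)}"
| ind: "pask (insert \<phi> (liftf ` \<Gamma>)) (insert (succ_inst \<phi>) (liftf ` \<Delta>)) \<Longrightarrow>
        pask (insert (inst \<phi> Zero) \<Gamma>) (insert (inst \<phi> t) \<Delta>)"

definition base_paradoxical :: "fm \<Rightarrow> bool" where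
  "base_paradoxical \<phi> \<longleftrightarrow> sentence \<phi> \<and>
     pask {\<phi>} {neg (Tr (gn \<phi>))} \<and> pask {neg (Tr (gn \<phi>))} {\<phi>} \<and>
     pask {neg \<phi>} {Tr (gn \<phi>)} \<and> pask {Tr (gn \<phi>)} {neg \<phi>}"

definition Pi_par :: "fm \<Rightarrow> bool" where
  "Pi_par \<phi> \<longleftrightarrow> base_paradoxical \<phi> \<or> base_paradoxical (neg \<phi>)"

text \<open>A partial model is ((T+, T-), (P+, P-)).\<close>
type_synonym pmodel = "(nat set \<times> nat set) \<times> (nat set \<times> nat set)"

definition Tp :: "pmodel \<Rightarrow> nat set" where "Tp M = fst (fst M)"
definition Tn :: "pmodel \<Rightarrow> nat set" where "Tn M = snd (fst M)"
definition Pp :: "pmodel \<Rightarrow> nat set" where "Pp M = fst (snd M)"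
definition Pn :: "pmodel \<Rightarrow> nat set" where "Pn M = snd (snd M)"

primrec fsize :: "fm \<Rightarrow> nat" where
  "fsize (Eq s t) = 0"
| "fsize (Neq s t) = 0"
| "fsize (Tr t) = 0"
| "fsize (NTr t) = 0"
| "fsize (Pr t) = 0"
| "fsize (NPr t) = 0"
| "fsize (And a b) = Suc (fsize a + fsize b)"
| "fsize (Or a b) = Suc (fsize a + fsize b)"
| "fsize (All a) = Suc (fsize a)"
| "fsize (Ex a) = Suc (fsize a)"

lemma fsize_substf [simp]: "fsize (substf \<sigma> \<phi>) = fsize \<phi>"
  by (induction \<phi> arbitrary: \<sigma>) auto

lemma fsize_inst [simp]: "fsize (inst \<phi> t) = fsize \<phi>"
  by (simp add: inst_def)

text \<open>Strong Kleene satisfaction (intended for sentences); quantifiers via numeral instances.\<close>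
function sk :: "pmodel \<Rightarrow> fm \<Rightarrow> bool" where
  "sk M (Eq s t) = (val s = val t)"
| "sk M (Neq s t) = (val s \<noteq> val t)"
| "sk M (Tr t) = (val t \<in> Tp M)"
| "sk M (NTr t) = (val t \<in> Tn M)"
| "sk M (Pr t) = (val t \<in> Pp M)"
| "sk M (NPr t) = (val t \<in> Pn M)"
| "sk M (And a b) = (sk M a \<and> sk M b)"
| "sk M (Or a b) = (sk M a \<or> sk M b)"
| "sk M (All a) = (\<forall>n. sk M (inst a (num n)))"
| "sk M (Ex a) = (\<exists>n. sk M (inst a (num n)))"
  by pat_completeness auto
termination
  by (relation "measure (\<lambda>(M, \<phi>). fsize \<phi>)") auto

text \<open>SK-satisfaction in (N,T,P) of the L-sentence Paradox(code phi), for phi a sentence: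
  the disjunction of clauses (1)--(7).  The arithmetical parts are bivalent.\<close>
definition Psat :: "pmodel \<Rightarrow> fm \<Rightarrow> bool" where
  "Psat M \<phi> \<longleftrightarrow>
     (sentence \<phi> \<and> Pi_par \<phi>) \<or>
     (case \<phi> of
        Tr t \<Rightarrow> val t \<in> Pp M
      | NTr t \<Rightarrow> val t \<in> Pp M
      | And \<psi> \<theta> \<Rightarrow> (code \<psi> \<in> Pp M \<and> code \<theta> \<in> Pp M) \<or> (code \<psi> \<in> Tp M \<and> code \<theta> \<in> Pp M)
                      \<or> (code \<theta> \<in> Tp M \<and> code \<psi> \<in> Pp M)
      | Or \<psi> \<theta> \<Rightarrow> (code \<psi> \<in> Pp M \<and> code \<theta> \<in> Pp M) \<or> (code \<psi> \<in> Tn M \<and> code \<theta> \<in> Pp M)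
                      \<or> (code \<theta> \<in> Tn M \<and> code \<psi> \<in> Pp M)
      | All \<psi> \<Rightarrow> (\<exists>y. code (inst \<psi> (num y)) \<in> Pp M)
                   \<and> (\<forall>y. code (inst \<psi> (num y)) \<in> Pp M \<or> code (inst \<psi> (num y)) \<in> Tp M)
      | Ex \<psi> \<Rightarrow> (\<exists>y. code (inst \<psi> (num y)) \<in> Pp M)
                   \<and> (\<forall>y. code (inst \<psi> (num y)) \<in> Pp M \<or> code (inst \<psi> (num y)) \<in> Tn M)
      | _ \<Rightarrow> False)"

definition P0minus :: "nat set" where
  "P0minus = {code (Pr (gn \<phi>)) | \<phi>. True}"

definition GammaTP :: "pmodel \<Rightarrow> pmodel" where
  "GammaTP M =
    (({code \<phi> | \<phi>. sentence \<phi> \<and> sk M \<phi>}, {code \<phi> | \<phi>. sentence \<phi> \<and> sk M (neg \<phi>)}),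
     ({code \<phi> | \<phi>. sentence \<phi> \<and> Psat M \<phi>},
      {code \<phi> | \<phi>. sentence \<phi> \<and> sk M (Or \<phi> (neg \<phi>))} \<union> P0minus))"

definition stage0 :: pmodel where
  "stage0 = (({}, {}), ({}, P0minus))"

text \<open>The transfinite sequence indexed by the elements of a well-ordered type:
  an element alpha stands for the ordinal of its initial segment {y. y < alpha}.\<close>
definition stage :: "'a::wellorder \<Rightarrow> pmodel" where
  "stage = wfrec {(x, y). x < y}
     (\<lambda>F x. if (\<forall>y. \<not> y < x) then stage0
            else if (\<exists>y. y < x \<and> (\<forall>z. z < x \<longrightarrow> z \<le> y))
              then GammaTP (F (THE y. y < x \<and> (\<forall>z. z < x \<longrightarrow> z \<le> y)))
            else ((\<Union>y\<in>{y. y < x}. Tp (F y), \<Union>y\<in>{y. y < x}. Tn (F y)),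
                  (\<Union>y\<in>{y. y < x}. Pp (F y), \<Union>y\<in>{y. y < x}. Pn (F y))))"

text \<open>The least fixed point (T_infty, P_infty) at which the sequence stabilizes.\<close>
definition stage_infty :: pmodel where
  "stage_infty = lfp GammaTP"

end

theory Submission
  imports Defs
begin

text \<open>
  The calculus PA[SK] is sound for classical semantics, where T and P may be interpreted by
  arbitrary sets.  A base paradoxical sentence \<phi> is therefore classically true exactly when its
  code lies outside T.  Interpreting T by everything and P so as to make a given P-literal true
  refutes this, so no P-literal and no negation of one satisfies \<Pi>.  Clauses (2)--(7) of the
  paradoxicality predicate only concern T-literals and compound sentences, hence the operator
  never puts the code of a P-literal into the positive extension of P.  By transfinite induction
  no stage does so, and neither does the least fixed point, since the model whose positive
  extension of P is the complement of these codes is a prefixed point.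
\<close>

primrec holds :: "nat set \<Rightarrow> nat set \<Rightarrow> (nat \<Rightarrow> nat) \<Rightarrow> fm \<Rightarrow> bool" where
  "holds T P e (Eq s t) = (evalt e s = evalt e t)"
| "holds T P e (Neq s t) = (evalt e s \<noteq> evalt e t)"
| "holds T P e (Tr t) = (evalt e t \<in> T)"
| "holds T P e (NTr t) = (evalt e t \<notin> T)"
| "holds T P e (Pr t) = (evalt e t \<in> P)"
| "holds T P e (NPr t) = (evalt e t \<notin> P)"
| "holds T P e (And a b) = (holds T P e a \<and> holds T P e b)"
| "holds T P e (Or a b) = (holds T P e a \<or> holds T P e b)"
| "holds T P e (All a) = (\<forall>x. holds T P (case_nat x e) a)"
| "holds T P e (Ex a) = (\<exists>x. holds T P (case_nat x e) a)"

lemma evalt_substt: "evalt e (substt \<sigma> t) = evalt (\<lambda>n. evalt e (\<sigma> n)) t"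
  by (induction t) auto

lemma holds_neg [simp]: "holds T P e (neg \<phi>) \<longleftrightarrow> \<not> holds T P e \<phi>"
  by (induction \<phi> arbitrary: e) auto

lemma evalt_up: "(\<lambda>n. evalt (case_nat x e) (up \<sigma> n)) = case_nat x (\<lambda>n. evalt e (\<sigma> n))"
  by (rule ext) (auto simp: up_def liftt_def evalt_substt split: nat.splits)

lemma holds_substf: "holds T P e (substf \<sigma> \<phi>) \<longleftrightarrow> holds T P (\<lambda>n. evalt e (\<sigma> n)) \<phi>"
  by (induction \<phi> arbitrary: e \<sigma>) (auto simp: evalt_substt evalt_up)

lemma holds_liftf [simp]: "holds T P (case_nat x e) (liftf \<phi>) \<longleftrightarrow> holds T P e \<phi>"
  by (simp add: liftf_def holds_substf)

lemma holds_inst [simp]: "holds T P e (inst \<phi> t) \<longleftrightarrow> holds T P (case_nat (evalt e t) e) \<phi>"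
proof -
  have "(\<lambda>n. evalt e (case n of 0 \<Rightarrow> t | Suc m \<Rightarrow> Var m)) = case_nat (evalt e t) e"
    by (rule ext) (simp split: nat.split)
  then show ?thesis by (simp add: inst_def holds_substf)
qed

lemma holds_succ_inst [simp]:
  "holds T P (case_nat x e) (succ_inst \<phi>) \<longleftrightarrow> holds T P (case_nat (Suc x) e) \<phi>"
proof -
  have "(\<lambda>n. evalt (case_nat x e) (if n = 0 then Sc (Var 0) else Var n)) = case_nat (Suc x) e"
    by (rule ext) (simp split: nat.split)
  then show ?thesis by (simp add: succ_inst_def holds_substf)
qed

lemma pask_sound:
  assumes "pask \<Gamma> \<Delta>" and "\<forall>\<gamma>\<in>\<Gamma>. holds T P e \<gamma>"
  shows "\<exists>\<delta>\<in>\<Delta>. holds T P e \<delta>"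
  using assms
proof (induction arbitrary: e rule: pask.induct)
  case weak
  then show ?case by blast
next
  case (allR \<Gamma> \<phi> \<Delta>)
  show ?case
  proof (cases "\<exists>\<delta>\<in>\<Delta>. holds T P e \<delta>")
    case False
    have "holds T P (case_nat x e) \<phi>" for x
      using allR.IH[of "case_nat x e"] allR.prems False by auto
    then show ?thesis by simp
  qed auto
next
  case (exL \<phi> \<Gamma> \<Delta>)
  then obtain x where "holds T P (case_nat x e) \<phi>" by auto
  then show ?case using exL.IH[of "case_nat x e"] exL.prems by auto
next
  case (ind \<phi> \<Gamma> \<Delta> t)
  show ?case
  proof (cases "\<exists>\<delta>\<in>\<Delta>. holds T P e \<delta>")
    case False
    have "holds T P (case_nat n e) \<phi>" for n
    proof (induction n)
      case 0
      then show ?case using ind.prems by simp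
    next
      case (Suc n)
      then show ?case using ind.IH[of "case_nat n e"] ind.prems False by auto
    qed
    then show ?thesis by simp
  qed auto
next
  case (repl \<Gamma> \<phi> t \<Delta> s)
  then show ?case by fastforce
qed auto

lemma val_num [simp]: "val (num n) = n"
  by (induction n) (auto simp: val_def)

lemma evalt_num [simp]: "evalt e (num n) = n"
  by (induction n) auto

lemma base_paradoxical_holds_iff:
  assumes "base_paradoxical \<phi>"
  shows "holds T P e \<phi> \<longleftrightarrow> code \<phi> \<notin> T"
proof -
  from assms have "pask {\<phi>} {NTr (gn \<phi>)}" and "pask {NTr (gn \<phi>)} {\<phi>}"
    by (simp_all add: base_paradoxical_def)
  then show ?thesis
    using pask_sound[of "{\<phi>}" "{NTr (gn \<phi>)}" T P e]
      pask_sound[of "{NTr (gn \<phi>)}" "{\<phi>}" T P e]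
    by (auto simp: gn_def)
qed

definition P_literal :: "fm \<Rightarrow> bool" where
  "P_literal \<phi> \<longleftrightarrow> (\<exists>s. \<phi> = Pr s \<or> \<phi> = NPr s)"

lemma P_literal_not_base_paradoxical:
  assumes "P_literal \<phi>"
  shows "\<not> base_paradoxical \<phi>"
proof
  assume bp: "base_paradoxical \<phi>"
  from assms obtain P where "holds UNIV P (\<lambda>_. 0) \<phi>"
    unfolding P_literal_def by (metis UNIV_I empty_iff holds.simps(5,6))
  then show False using base_paradoxical_holds_iff[OF bp] by simp
qed

lemma P_literal_not_Psat:
  assumes "P_literal \<phi>"
  shows "\<not> Psat M \<phi>"
proof -
  have "P_literal (neg \<phi>)" using assms by (auto simp: P_literal_def)
  then have "\<not> Pi_par \<phi>"
    using assms P_literal_not_base_paradoxical by (simp add: Pi_par_def)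
  then show ?thesis using assms by (auto simp: Psat_def P_literal_def)
qed

lemma inj_code_tm: "inj code_tm"
proof (rule injI)
  show "code_tm s = code_tm t \<Longrightarrow> s = t" for s t
    by (induction s arbitrary: t) (case_tac t; simp)+
qed

lemma inj_code: "inj code"
proof (rule injI)
  show "code \<phi> = code \<psi> \<Longrightarrow> \<phi> = \<psi>" for \<phi> \<psi>
    by (induction \<phi> arbitrary: \<psi>) (case_tac \<psi>; simp add: inj_code_tm[THEN inj_eq])+
qed

definition P_literal_codes :: "nat set" where
  "P_literal_codes = code ` Collect P_literal"

lemma code_mem_P_literal_codes: "P_literal \<phi> \<Longrightarrow> code \<phi> \<in> P_literal_codes"
  by (simp add: P_literal_codes_def)

lemma Pp_GammaTP_disjoint: "Pp (GammaTP M) \<inter> P_literal_codes = {}"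
  using P_literal_not_Psat[of _ M]
  by (auto simp: GammaTP_def Pp_def P_literal_codes_def inj_code[THEN inj_eq])

lemma stage_unfold:
  "stage x = (if (\<forall>y. \<not> y < x) then stage0
            else if (\<exists>y. y < x \<and> (\<forall>z. z < x \<longrightarrow> z \<le> y))
              then GammaTP (stage (THE y. y < x \<and> (\<forall>z. z < x \<longrightarrow> z \<le> y)))
            else ((\<Union>y\<in>{y. y < x}. Tp (stage y), \<Union>y\<in>{y. y < x}. Tn (stage y)),
                  (\<Union>y\<in>{y. y < x}. Pp (stage y), \<Union>y\<in>{y. y < x}. Pn (stage y))))"
  (is "_ = ?R")
proof -
  have "stage x = (\<lambda>F x. if (\<forall>y. \<not> y < x) then stage0
            else if (\<exists>y. y < x \<and> (\<forall>z. z < x \<longrightarrow> z \<le> y))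
              then GammaTP (F (THE y. y < x \<and> (\<forall>z. z < x \<longrightarrow> z \<le> y)))
            else ((\<Union>y\<in>{y. y < x}. Tp (F y), \<Union>y\<in>{y. y < x}. Tn (F y)),
                  (\<Union>y\<in>{y. y < x}. Pp (F y), \<Union>y\<in>{y. y < x}. Pn (F y))))
        (cut stage {(x, y). x < y} x) x"
    unfolding stage_def by (rule wfrec[OF wf])
  also have "\<dots> = ?R"
  proof (cases "\<exists>y. y < x \<and> (\<forall>z. z < x \<longrightarrow> z \<le> y)")
    case True
    then obtain y where y: "y < x \<and> (\<forall>z. z < x \<longrightarrow> z \<le> y)" by blast
    have "(THE y. y < x \<and> (\<forall>z. z < x \<longrightarrow> z \<le> y)) = y"
      using y by (intro the_equality) (auto intro: order_antisym)
    then show ?thesis using y by (auto simp: cut_def)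
  next
    case False
    then show ?thesis by (auto simp: cut_def)
  qed
  finally show ?thesis .
qed

lemma Pp_stage_disjoint: "Pp (stage (\<alpha>::'a::wellorder)) \<inter> P_literal_codes = {}"
proof (induction \<alpha> rule: less_induct)
  case (less x)
  show ?case
    by (subst stage_unfold) (use less Pp_GammaTP_disjoint in \<open>auto simp: stage0_def Pp_def\<close>)
qed

lemma Pp_stage_infty_disjoint: "Pp stage_infty \<inter> P_literal_codes = {}"
proof -
  define M :: pmodel where "M = ((UNIV, UNIV), (- P_literal_codes, UNIV))"
  have "GammaTP M \<le> M"
    using Pp_GammaTP_disjoint[of M] by (auto simp: M_def less_eq_prod_def Pp_def)
  then have "stage_infty \<le> M"
    unfolding stage_infty_def by (rule lfp_lowerbound)
  then show ?thesis by (auto simp: M_def less_eq_prod_def Pp_def)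
qed

theorem mainTheorem13:
  fixes \<alpha> :: "'a::wellorder" and t :: tm
  assumes "closed_term t"
  shows "\<not> sk (stage \<alpha>) (Or (Pr (gn (Pr t))) (Pr (gn (NPr t))))
         \<and> P0minus \<inter> Pp stage_infty = {}"
proof
  have "code (Pr t) \<in> P_literal_codes" and "code (NPr t) \<in> P_literal_codes"
    by (simp_all add: code_mem_P_literal_codes P_literal_def del: code.simps)
  then show "\<not> sk (stage \<alpha>) (Or (Pr (gn (Pr t))) (Pr (gn (NPr t))))"
    using Pp_stage_disjoint[of \<alpha>] by (auto simp: gn_def)
next
  have "P0minus \<subseteq> P_literal_codes"
    by (auto simp: P0minus_def P_literal_def code_mem_P_literal_codes simp del: code.simps)
  then show "P0minus \<inter> Pp stage_infty = {}"
    using Pp_stage_infty_disjoint by blast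
qed

end
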